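(* Consider $$u_i'=\mu\sum_{j=1}^nL_{ij}u_j+u_i(p_i-u_i-v_i),\qquad v_i'=\mu\sum_{j=1}^nL_{ij}v_j+v_i(q_i-u_i-v_i),\qquad i=1,\dots,n,$$ with $\mu>0$, $p,q\gg0$, and assume (A2)–(A3). Let $\Omega_u=\{i:p_i>q_i\}$ and $\Omega_v=\{i:p_i<q_i\}$, and suppose both are nonempty and $\Omega_u\cup\Omega_v=\{1,\dots,n\}$. Define $u_0,v_0\in\mathbb R^n$ by $u_{0i}=p_i$, $v_{0i}=0$ for $i\in\Omega_u$ and $u_{0i}=0$, $v_{0i}=q_i$ for $i\in\Omega_v$. For $\mu>0$ small, let $(u,v)=(u(\mu),v(\mu))$ be the unique positive equilibrium of the system. Then $\lim_{\mu\to0^+}(u(\mu),v(\mu))=(u_0,v_0)$.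
   Context: Let $n\ge2$ and $A=(a_{ij})_{n\times n}$ with $a_{ij}\ge0$ for $i\ne j$. The connection matrix $L$ has $L_{ij}=a_{ij}$ for $i\ne j$, $L_{ii}=-\sum_{k\ne i}a_{ki}$. The weighted digraph $\mathcal G$ associated with $A$ has vertices $\{1,\dots,n\}$ and, for $i\ne j$, an arc $(i,j)$ iff $a_{ji}>0$, with weight $a_{ji}$. A cycle is a list of distinct vertices $i_1,\dots,i_k$, $k\ge2$, with arcs $(i_m,i_{m+1})$, $m<k$, and $(i_k,i_1)$; its weight is the product of its arc weights; its reverse has all arcs reversed. $\mathcal G$ is cycle-balanced if for every cycle its reverse is also a cycle of $\mathcal G$ with the same weight. (A2): $L$ is irreducible. (A3): $\mathcal G$ is cycle-balanced. Under these hypotheses (since $p\not\ge q$ and $q\not\ge p$) the system has, for all sufficiently small $\mu>0$, a unique positive equilibrium. *)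

theory Defs
  imports "HOL-Analysis.Analysis"
begin

definition conn_matrix :: "real^'n^'n \<Rightarrow> real^'n^'n" where
  "conn_matrix A = (\<chi> i j. if i = j then - (\<Sum>k\<in>UNIV - {i}. A $ k $ i) else A $ i $ j)"

text \<open>Irreducible square matrix: there is no nonempty proper index set S with
  M_ij = 0 for all i in S and j not in S (i.e. M is not permutation-similar to a
  block triangular matrix).\<close>
definition irreducible_mat :: "real^'n^'n \<Rightarrow> bool" where
  "irreducible_mat M \<longleftrightarrow>
     \<not> (\<exists>S::'n set. S \<noteq> {} \<and> S \<noteq> UNIV \<and> (\<forall>i\<in>S. \<forall>j\<in>UNIV - S. M $ i $ j = 0))"

definition arc :: "real^'n^'n \<Rightarrow> 'n \<Rightarrow> 'n \<Rightarrow> bool" where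
  "arc A i j \<longleftrightarrow> i \<noteq> j \<and> A $ j $ i > 0"

definition is_cycle :: "real^'n^'n \<Rightarrow> 'n list \<Rightarrow> bool" where
  "is_cycle A cs \<longleftrightarrow> length cs \<ge> 2 \<and> distinct cs \<and>
     (\<forall>m < length cs. arc A (cs ! m) (cs ! ((m + 1) mod length cs)))"

definition cycle_weight :: "real^'n^'n \<Rightarrow> 'n list \<Rightarrow> real" where
  "cycle_weight A cs = (\<Prod>m < length cs. A $ (cs ! ((m + 1) mod length cs)) $ (cs ! m))"

definition cycle_balanced :: "real^'n^'n \<Rightarrow> bool" where
  "cycle_balanced A \<longleftrightarrow> (\<forall>cs. is_cycle A cs \<longrightarrow>
     is_cycle A (rev cs) \<and> cycle_weight A (rev cs) = cycle_weight A cs)"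

definition pos_equilibrium ::
  "real^'n^'n \<Rightarrow> real^'n \<Rightarrow> real^'n \<Rightarrow> real \<Rightarrow> real^'n \<Rightarrow> real^'n \<Rightarrow> bool" where
  "pos_equilibrium L p q \<mu> u v \<longleftrightarrow>
     (\<forall>i. u $ i > 0 \<and> v $ i > 0) \<and>
     (\<forall>i. \<mu> * (\<Sum>j\<in>UNIV. L $ i $ j * u $ j) + u $ i * (p $ i - u $ i - v $ i) = 0) \<and>
     (\<forall>i. \<mu> * (\<Sum>j\<in>UNIV. L $ i $ j * v $ j) + v $ i * (q $ i - u $ i - v $ i) = 0)"

end

theory Submission
  imports Defs
begin

text \<open>
  Summing the equilibrium equations, the diffusion terms cancel (the columns of the connection
  matrix sum to zero), so \<open>\<Sum>\<^sub>j u\<^sub>j (p\<^sub>j - u\<^sub>j - v\<^sub>j) = 0\<close>; completing the square bounds every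
  equilibrium by \<open>\<parallel>p\<parallel>\<close> and \<open>\<parallel>q\<parallel>\<close>, uniformly in \<open>\<mu>\<close>. At a site where \<open>p\<^sub>i > q\<^sub>i\<close> the equations
  read \<open>u\<^sub>i (p\<^sub>i - s) = O(\<mu>)\<close> and \<open>v\<^sub>i (q\<^sub>i - s) = O(\<mu>)\<close> with \<open>s = u\<^sub>i + v\<^sub>i\<close>. The off-diagonal
  part of the diffusion of \<open>u\<close> is nonnegative, which gives the one-sided bound \<open>s \<ge> p\<^sub>i - O(\<mu>)\<close>;
  hence \<open>s - q\<^sub>i\<close> stays away from zero, so \<open>v\<^sub>i = O(\<mu>)\<close>, then \<open>u\<^sub>i \<ge> p\<^sub>i/2\<close> and finally
  \<open>u\<^sub>i = p\<^sub>i + O(\<mu>)\<close>. The sites with \<open>p\<^sub>i < q\<^sub>i\<close> are symmetric.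
\<close>

lemma conn_matrix_column_sum: "(\<Sum>i\<in>UNIV. conn_matrix A $ i $ j) = 0"
proof -
  have "(\<Sum>i\<in>UNIV. conn_matrix A $ i $ j)
      = conn_matrix A $ j $ j + (\<Sum>i\<in>UNIV-{j}. conn_matrix A $ i $ j)"
    by (simp add: sum.remove)
  also have "(\<Sum>i\<in>UNIV-{j}. conn_matrix A $ i $ j) = (\<Sum>i\<in>UNIV-{j}. A $ i $ j)"
    by (intro sum.cong) (auto simp: conn_matrix_def)
  finally show ?thesis by (simp add: conn_matrix_def)
qed

lemma sum_conn_matrix_mult: "(\<Sum>i\<in>UNIV. \<Sum>j\<in>UNIV. conn_matrix A $ i $ j * u $ j) = 0"
proof -
  have "(\<Sum>i\<in>UNIV. \<Sum>j\<in>UNIV. conn_matrix A $ i $ j * u $ j)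
      = (\<Sum>j\<in>UNIV. (\<Sum>i\<in>UNIV. conn_matrix A $ i $ j) * u $ j)"
    by (subst sum.swap) (simp add: sum_distrib_right)
  then show ?thesis by (simp add: conn_matrix_column_sum)
qed

lemma conn_matrix_mult_ge:
  assumes "\<forall>i j. i \<noteq> j \<longrightarrow> A $ i $ j \<ge> 0" and "\<forall>j. u $ j \<ge> 0"
  shows "(\<Sum>j\<in>UNIV. conn_matrix A $ i $ j * u $ j) \<ge> - (\<Sum>k\<in>UNIV-{i}. A $ k $ i) * u $ i"
proof -
  have "(\<Sum>j\<in>UNIV. conn_matrix A $ i $ j * u $ j)
      = conn_matrix A $ i $ i * u $ i + (\<Sum>j\<in>UNIV-{i}. conn_matrix A $ i $ j * u $ j)"
    by (simp add: sum.remove)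
  moreover have "(\<Sum>j\<in>UNIV-{i}. conn_matrix A $ i $ j * u $ j) \<ge> 0"
    using assms by (intro sum_nonneg) (auto simp: conn_matrix_def)
  ultimately show ?thesis by (simp add: conn_matrix_def)
qed

lemma abs_sum_mult_le:
  assumes "\<forall>j. \<bar>u $ j\<bar> \<le> B"
  shows "\<bar>\<Sum>j\<in>UNIV. M $ i $ j * u $ j\<bar> \<le> (\<Sum>j\<in>UNIV. \<bar>M $ i $ j\<bar>) * (B::real)"
proof -
  have "\<bar>\<Sum>j\<in>UNIV. M $ i $ j * u $ j\<bar> \<le> (\<Sum>j\<in>UNIV. \<bar>M $ i $ j * u $ j\<bar>)"
    by (rule sum_abs)
  also have "\<dots> \<le> (\<Sum>j\<in>UNIV. \<bar>M $ i $ j\<bar> * B)"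
    using assms by (intro sum_mono) (simp add: abs_mult mult_left_mono)
  finally show ?thesis by (simp add: sum_distrib_right)
qed

lemma logistic_balance_le_norm:
  fixes u v p :: "real^'n"
  assumes u: "\<forall>j. u $ j \<ge> 0" and v: "\<forall>j. v $ j \<ge> 0"
    and balance: "(\<Sum>j\<in>UNIV. u $ j * (p $ j - u $ j - v $ j)) = 0"
  shows "u $ i \<le> norm p"
proof -
  have "(u $ i - p $ i / 2)\<^sup>2 \<le> (\<Sum>j\<in>UNIV. (u $ j - p $ j / 2)\<^sup>2)"
    by (rule member_le_sum) auto
  also have "\<dots> \<le> (\<Sum>j\<in>UNIV. (p $ j)\<^sup>2 / 4 - u $ j * (p $ j - u $ j - v $ j))"
  proof (rule sum_mono)
    fix j
    have "u $ j * v $ j \<ge> 0" using u v by simp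
    then show "(u $ j - p $ j / 2)\<^sup>2 \<le> (p $ j)\<^sup>2 / 4 - u $ j * (p $ j - u $ j - v $ j)"
      by (simp add: power2_eq_square algebra_simps)
  qed
  also have "\<dots> = (\<Sum>j\<in>UNIV. (p $ j)\<^sup>2) / 4"
    using balance by (simp add: sum_subtractf sum_divide_distrib)
  also have "\<dots> = (norm p / 2)\<^sup>2"
    by (simp add: norm_vec_def L2_set_def sum_nonneg power_divide)
  finally have "u $ i - p $ i / 2 \<le> norm p / 2"
    by (rule power2_le_imp_le) simp
  moreover have "p $ i \<le> norm p"
    by (metis abs_le_D1 component_le_norm_cart)
  ultimately show ?thesis by linarith
qed

lemma pos_equilibrium_swap:
  "pos_equilibrium L p q \<mu> u v \<Longrightarrow> pos_equilibrium L q p \<mu> v u"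
  unfolding pos_equilibrium_def by (simp add: algebra_simps)

lemma pos_equilibrium_balance:
  assumes "pos_equilibrium (conn_matrix A) p q \<mu> u v"
  shows "(\<Sum>j\<in>UNIV. u $ j * (p $ j - u $ j - v $ j)) = 0"
proof -
  let ?L = "conn_matrix A"
  have "0 = (\<Sum>j\<in>UNIV. \<mu> * (\<Sum>k\<in>UNIV. ?L $ j $ k * u $ k) + u $ j * (p $ j - u $ j - v $ j))"
    using assms unfolding pos_equilibrium_def by simp
  also have "\<dots> = \<mu> * (\<Sum>j\<in>UNIV. \<Sum>k\<in>UNIV. ?L $ j $ k * u $ k)
      + (\<Sum>j\<in>UNIV. u $ j * (p $ j - u $ j - v $ j))"
    by (simp add: sum.distrib sum_distrib_left)
  finally show ?thesis by (simp add: sum_conn_matrix_mult)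
qed

lemma pos_equilibrium_le_norm:
  assumes "pos_equilibrium (conn_matrix A) p q \<mu> u v"
  shows "u $ i \<le> norm p" and "v $ i \<le> norm q"
proof -
  have pos: "\<forall>j. u $ j \<ge> 0 \<and> v $ j \<ge> 0"
    using assms unfolding pos_equilibrium_def by (simp add: less_imp_le)
  show "u $ i \<le> norm p"
    using pos pos_equilibrium_balance[OF assms] by (intro logistic_balance_le_norm) auto
  show "v $ i \<le> norm q"
    using pos pos_equilibrium_balance[OF pos_equilibrium_swap[OF assms]]
    by (intro logistic_balance_le_norm) auto
qed

lemma competition_site_estimate:
  fixes \<mu> u v p q d C \<alpha> \<beta> :: real
  assumes mu: "\<mu> > 0" and u: "u > 0" and v: "v > 0" and p: "p > 0" and pq: "q < p"
    and hu: "u * (p - (u + v)) = \<mu> * \<alpha>" and hv: "v * (q - (u + v)) = \<mu> * \<beta>"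
    and ha: "\<alpha> \<le> d * u"
    and aC: "\<bar>\<alpha>\<bar> \<le> C" and bC: "\<bar>\<beta>\<bar> \<le> C"
    and small1: "\<mu> * d \<le> (p - q) / 2" and small2: "\<mu> * (d + 2 * C / (p - q)) \<le> p / 2"
  shows "\<bar>v\<bar> \<le> \<mu> * (2 * C / (p - q)) \<and> \<bar>u - p\<bar> \<le> \<mu> * (2 * C / p + 2 * C / (p - q))"
proof -
  define s where "s = u + v"
  have "u * (p - s) \<le> u * (\<mu> * d)"
    using hu ha mu unfolding s_def by (simp add: mult_left_mono ac_simps)
  then have hd: "p - s \<le> \<mu> * d" using u by simp
  then have "p - s \<le> (p - q) / 2" using small1 by linarith
  then have gap: "s - q \<ge> (p - q) / 2" by (simp add: field_simps)
  have "\<bar>v\<bar> * ((p - q) / 2) \<le> \<bar>v\<bar> * (s - q)" using gap by (intro mult_left_mono) auto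
  also have "\<dots> = \<bar>v * (q - s)\<bar>" using gap pq by (simp add: abs_mult)
  also have "\<dots> = \<mu> * \<bar>\<beta>\<bar>" using hv mu unfolding s_def by (simp add: abs_mult)
  also have "\<dots> \<le> \<mu> * C" using bC mu by simp
  finally have vb: "\<bar>v\<bar> \<le> \<mu> * (2 * C / (p - q))" using pq by (simp add: field_simps)
  have "\<mu> * (d + 2 * C / (p - q)) = \<mu> * d + \<mu> * (2 * C / (p - q))" by (simp add: algebra_simps)
  then have "u \<ge> p / 2" using vb hd small2 v unfolding s_def by linarith
  then have "\<bar>p - s\<bar> * (p / 2) \<le> \<bar>p - s\<bar> * u" by (intro mult_left_mono) auto
  also have "\<dots> = \<bar>u * (p - s)\<bar>" using u by (simp add: abs_mult)
  also have "\<dots> = \<mu> * \<bar>\<alpha>\<bar>" using hu mu unfolding s_def by (simp add: abs_mult)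
  also have "\<dots> \<le> \<mu> * C" using aC mu by simp
  finally have "\<bar>p - s\<bar> \<le> \<mu> * (2 * C / p)" using p by (simp add: field_simps)
  moreover have "\<bar>u - p\<bar> \<le> \<bar>p - s\<bar> + \<bar>v\<bar>" unfolding s_def by simp
  ultimately show ?thesis using vb by (simp add: algebra_simps)
qed

lemma eventually_at_right_0_mult_le:
  fixes c e :: real
  assumes "e > 0"
  shows "eventually (\<lambda>\<mu>. \<mu> * c \<le> e) (at_right 0)"
proof -
  have "((\<lambda>\<mu>. \<mu> * c) \<longlongrightarrow> 0) (at_right (0::real))"
    by (rule tendsto_mult_left_zero[OF tendsto_ident_at])
  then have "eventually (\<lambda>\<mu>. \<mu> * c < e) (at_right 0)"
    using assms by (rule order_tendstoD(2))
  then show ?thesis by (rule eventually_mono) simp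
qed

lemma tendsto_at_right_0_if_linear_bound:
  fixes f :: "real \<Rightarrow> real"
  assumes "eventually (\<lambda>\<mu>. \<bar>f \<mu> - a\<bar> \<le> \<mu> * K) (at_right 0)"
  shows "(f \<longlongrightarrow> a) (at_right 0)"
proof -
  have "eventually (\<lambda>\<mu>. norm (f \<mu> - a) \<le> \<mu> * K) (at_right 0)"
    using assms by simp
  moreover have "((\<lambda>\<mu>. \<mu> * K) \<longlongrightarrow> 0) (at_right (0::real))"
    by (rule tendsto_mult_left_zero[OF tendsto_ident_at])
  ultimately have "((\<lambda>\<mu>. f \<mu> - a) \<longlongrightarrow> 0) (at_right 0)"
    by (rule Lim_null_comparison)
  then show ?thesis by (simp add: LIM_zero_iff)
qed

lemma pos_equilibrium_site_estimate:
  fixes A :: "real^'n^'n" and p q u v :: "real^'n"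
  assumes A_nonneg: "\<forall>i j. i \<noteq> j \<longrightarrow> A $ i $ j \<ge> 0"
    and eq: "pos_equilibrium (conn_matrix A) p q \<mu> u v" and mu: "\<mu> > 0"
    and p_pos: "p $ i > 0" and wins: "q $ i < p $ i"
  defines "d \<equiv> \<Sum>k\<in>UNIV-{i}. A $ k $ i"
    and "C \<equiv> (\<Sum>j\<in>UNIV. \<bar>conn_matrix A $ i $ j\<bar>) * (norm p + norm q)"
  assumes small1: "\<mu> * d \<le> (p $ i - q $ i) / 2"
    and small2: "\<mu> * (d + 2 * C / (p $ i - q $ i)) \<le> p $ i / 2"
  shows "\<bar>v $ i\<bar> \<le> \<mu> * (2 * C / (p $ i - q $ i))
    \<and> \<bar>u $ i - p $ i\<bar> \<le> \<mu> * (2 * C / p $ i + 2 * C / (p $ i - q $ i))"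
proof -
  let ?L = "conn_matrix A"
  have pos: "\<forall>j. u $ j > 0 \<and> v $ j > 0"
    using eq unfolding pos_equilibrium_def by blast
  have bound: "\<forall>j. \<bar>u $ j\<bar> \<le> norm p + norm q" "\<forall>j. \<bar>v $ j\<bar> \<le> norm p + norm q"
    using pos pos_equilibrium_le_norm[OF eq] norm_ge_zero[of p] norm_ge_zero[of q]
    by (simp_all add: abs_of_pos add_increasing add_increasing2)
  define \<alpha> where "\<alpha> = - (\<Sum>k\<in>UNIV. ?L $ i $ k * u $ k)"
  define \<beta> where "\<beta> = - (\<Sum>k\<in>UNIV. ?L $ i $ k * v $ k)"
  have hu: "u $ i * (p $ i - (u $ i + v $ i)) = \<mu> * \<alpha>"
    and hv: "v $ i * (q $ i - (u $ i + v $ i)) = \<mu> * \<beta>"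
    using eq unfolding pos_equilibrium_def \<alpha>_def \<beta>_def by (simp_all add: algebra_simps)
  have ha: "\<alpha> \<le> d * u $ i"
    using conn_matrix_mult_ge[OF A_nonneg, of u i] pos
    unfolding \<alpha>_def d_def by (simp add: less_imp_le)
  have aC: "\<bar>\<alpha>\<bar> \<le> C" and bC: "\<bar>\<beta>\<bar> \<le> C"
    using abs_sum_mult_le[OF bound(1)] abs_sum_mult_le[OF bound(2)]
    unfolding \<alpha>_def \<beta>_def C_def by simp_all
  show ?thesis
    using pos competition_site_estimate[OF mu _ _ p_pos wins hu hv ha aC bC small1 small2] by blast
qed

lemma pos_equilibria_tendsto_at_winning_site:
  fixes A :: "real^'n^'n" and p q :: "real^'n" and u v :: "real \<Rightarrow> real^'n"
  assumes A_nonneg: "\<forall>i j. i \<noteq> j \<longrightarrow> A $ i $ j \<ge> 0"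
    and equil: "eventually (\<lambda>\<mu>. pos_equilibrium (conn_matrix A) p q \<mu> (u \<mu>) (v \<mu>)) (at_right 0)"
    and p_pos: "p $ i > 0" and wins: "q $ i < p $ i"
  shows "((\<lambda>\<mu>. u \<mu> $ i) \<longlongrightarrow> p $ i) (at_right 0)" and "((\<lambda>\<mu>. v \<mu> $ i) \<longlongrightarrow> 0) (at_right 0)"
proof -
  define d where "d = (\<Sum>k\<in>UNIV-{i}. A $ k $ i)"
  define C where "C = (\<Sum>j\<in>UNIV. \<bar>conn_matrix A $ i $ j\<bar>) * (norm p + norm q)"
  have "eventually (\<lambda>\<mu>. \<mu> * d \<le> (p $ i - q $ i) / 2) (at_right 0)"
    using wins by (intro eventually_at_right_0_mult_le) simp
  moreover have "eventually (\<lambda>\<mu>. \<mu> * (d + 2 * C / (p $ i - q $ i)) \<le> p $ i / 2) (at_right 0)"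
    using p_pos by (intro eventually_at_right_0_mult_le) simp
  ultimately have "eventually (\<lambda>\<mu>. \<bar>v \<mu> $ i\<bar> \<le> \<mu> * (2 * C / (p $ i - q $ i))
      \<and> \<bar>u \<mu> $ i - p $ i\<bar> \<le> \<mu> * (2 * C / p $ i + 2 * C / (p $ i - q $ i))) (at_right 0)"
    using equil eventually_at_right_less
  proof eventually_elim
    case (elim \<mu>)
    then show ?case
      using pos_equilibrium_site_estimate[OF A_nonneg elim(3,4) p_pos wins]
      unfolding d_def C_def by blast
  qed
  then have v_bound: "eventually (\<lambda>\<mu>. \<bar>v \<mu> $ i - 0\<bar> \<le> \<mu> * (2 * C / (p $ i - q $ i))) (at_right 0)"
    and u_bound: "eventually (\<lambda>\<mu>. \<bar>u \<mu> $ i - p $ i\<bar> \<le> \<mu> * (2 * C / p $ i + 2 * C / (p $ i - q $ i))) (at_right 0)"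
    by (auto elim: eventually_mono)
  show "((\<lambda>\<mu>. u \<mu> $ i) \<longlongrightarrow> p $ i) (at_right 0)"
    by (rule tendsto_at_right_0_if_linear_bound[OF u_bound])
  show "((\<lambda>\<mu>. v \<mu> $ i) \<longlongrightarrow> 0) (at_right 0)"
    by (rule tendsto_at_right_0_if_linear_bound[OF v_bound])
qed

theorem theorem4p5:
  fixes A :: "real^'n^'n" and p q :: "real^'n"
    and u v :: "real \<Rightarrow> real^'n"
  assumes n2: "CARD('n) \<ge> 2"
    and A_nonneg: "\<forall>i j. i \<noteq> j \<longrightarrow> A $ i $ j \<ge> 0"
    and p_pos: "\<forall>i. p $ i > 0" and q_pos: "\<forall>i. q $ i > 0"
    and A2: "irreducible_mat (conn_matrix A)"
    and A3: "cycle_balanced A"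
    and Omega_u_ne: "\<exists>i. p $ i > q $ i"
    and Omega_v_ne: "\<exists>i. p $ i < q $ i"
    and Omega_cover: "\<forall>i. p $ i > q $ i \<or> p $ i < q $ i"
    and equil: "eventually (\<lambda>\<mu>. pos_equilibrium (conn_matrix A) p q \<mu> (u \<mu>) (v \<mu>)) (at_right 0)"
  shows "((\<lambda>\<mu>. (u \<mu>, v \<mu>)) \<longlongrightarrow>
           ((\<chi> i. if p $ i > q $ i then p $ i else 0), (\<chi> i. if p $ i < q $ i then q $ i else 0)))
         (at_right 0)"
proof -
  have equil_swapped:
    "eventually (\<lambda>\<mu>. pos_equilibrium (conn_matrix A) q p \<mu> (v \<mu>) (u \<mu>)) (at_right 0)"
    using equil by (rule eventually_mono) (rule pos_equilibrium_swap)
  have site_limits: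
    "((\<lambda>\<mu>. u \<mu> $ i) \<longlongrightarrow> (if p $ i > q $ i then p $ i else 0)) (at_right 0)
     \<and> ((\<lambda>\<mu>. v \<mu> $ i) \<longlongrightarrow> (if p $ i < q $ i then q $ i else 0)) (at_right 0)" for i
  proof (cases "p $ i > q $ i")
    case True
    then show ?thesis
      using pos_equilibria_tendsto_at_winning_site[OF A_nonneg equil p_pos[rule_format] True] by simp
  next
    case False
    then have "p $ i < q $ i" using Omega_cover by blast
    then show ?thesis
      using pos_equilibria_tendsto_at_winning_site[OF A_nonneg equil_swapped q_pos[rule_format]]
      by simp
  qed
  show ?thesis
    by (intro tendsto_Pair vec_tendstoI) (simp_all add: site_limits)
qed

end
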